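(* The presentations $$\mathcal P_1=\langle a,b,c,d,r,s\mid ab\bar a r,\ \bar r\bar b c s,\ \bar s d\bar c\bar d\rangle,\qquad \mathcal P_2=\langle a,b,c,d,r,s,t,u,v\mid abr,\ \bar r\bar a s,\ \bar s\bar b t,\ \bar t c u,\ \bar u d v,\ \bar v\bar c\bar d\rangle$$ (where $\bar x=x^{-1}$) are of small cancellation type $C(4)$–$T(5)$ and $C(3)$–$T(7)$ respectively, both present the fundamental group of the closed orientable surface of genus two, and neither is a Dehn presentation.
   Context: $C(p)$ and $T(q)$ are the standard small cancellation conditions (no relator in the symmetrized closure is a product of fewer than $p$ pieces; $T(q)$ is the standard condition on cycles of relators of length between 3 and $q-1$). A presentation is a Dehn presentation if every nonempty cyclically reduced word representing the identity contains a subword $v$ of (a cyclic permutation of) some relator $r^{\pm1}$ with $|v|>|r|/2$. *)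

theory Defs
  imports "HOL-Algebra.Group"
begin

type_synonym 'a letter = "'a \<times> bool"   (* (x, True) = x, (x, False) = x^-1 *)
type_synonym 'a word = "'a letter list"

definition linv :: "'a letter \<Rightarrow> 'a letter" where
  "linv l = (fst l, \<not> snd l)"

definition winv :: "'a word \<Rightarrow> 'a word" where
  "winv w = rev (map linv w)"

definition words_on :: "'a set \<Rightarrow> 'a word set" where
  "words_on X = {w. fst ` set w \<subseteq> X}"

definition freely_reduced :: "'a word \<Rightarrow> bool" where
  "freely_reduced w \<longleftrightarrow> (\<forall>i. Suc i < length w \<longrightarrow> w ! Suc i \<noteq> linv (w ! i))"

definition cyc_reduced :: "'a word \<Rightarrow> bool" where
  "cyc_reduced w \<longleftrightarrow> freely_reduced w \<and> (w \<noteq> [] \<longrightarrow> last w \<noteq> linv (hd w))"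

text \<open>Symmetrized closure: all cyclic permutations of the relators and their inverses
  (the relators considered below are cyclically reduced).\<close>
definition symm_closure :: "'a word set \<Rightarrow> 'a word set" where
  "symm_closure R = {rotate k r | k r. r \<in> R \<union> winv ` R}"

definition piece :: "'a word set \<Rightarrow> 'a word \<Rightarrow> bool" where
  "piece R p \<longleftrightarrow> p \<noteq> [] \<and> (\<exists>r1 r2 u1 u2. r1 \<in> symm_closure R \<and> r2 \<in> symm_closure R
      \<and> r1 \<noteq> r2 \<and> r1 = p @ u1 \<and> r2 = p @ u2)"

definition C_cond :: "nat \<Rightarrow> 'a word set \<Rightarrow> bool" where
  "C_cond p R \<longleftrightarrow> (\<forall>r \<in> symm_closure R. \<forall>ps. concat ps = r \<and> (\<forall>q \<in> set ps. piece R q)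
      \<longrightarrow> p \<le> length ps)"

text \<open>T(q) (Lyndon--Schupp): for 3 <= h < q and r_1,...,r_h in the symmetrized closure with
  no cyclically successive pair an inverse pair, at least one of the products
  r_1 r_2, ..., r_{h-1} r_h, r_h r_1 is freely reduced without cancellation.\<close>
definition T_cond :: "nat \<Rightarrow> 'a word set \<Rightarrow> bool" where
  "T_cond q R \<longleftrightarrow> (\<forall>h. 3 \<le> h \<and> h < q \<longrightarrow>
      (\<forall>rs :: nat \<Rightarrow> 'a word.
         (\<forall>i<h. rs i \<in> symm_closure R) \<and> (\<forall>i<h. rs (Suc i mod h) \<noteq> winv (rs i))
         \<longrightarrow> (\<exists>i<h. last (rs i) \<noteq> linv (hd (rs (Suc i mod h))))))"

definition pres_step :: "'a set \<Rightarrow> 'a word set \<Rightarrow> 'a word \<Rightarrow> 'a word \<Rightarrow> bool" where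
  "pres_step X R u w \<longleftrightarrow>
     (\<exists>p q l. fst l \<in> X \<and> u = p @ q \<and> w = p @ [l, linv l] @ q) \<or>
     (\<exists>p q r. r \<in> R \<and> u = p @ q \<and> w = p @ r @ q)"

definition pres_eq :: "'a set \<Rightarrow> 'a word set \<Rightarrow> 'a word \<Rightarrow> 'a word \<Rightarrow> bool" where
  "pres_eq X R = equivclp (pres_step X R)"

definition pres_class :: "'a set \<Rightarrow> 'a word set \<Rightarrow> 'a word \<Rightarrow> 'a word set" where
  "pres_class X R w = {w'. pres_eq X R w w'}"

definition pres_group :: "'a set \<Rightarrow> 'a word set \<Rightarrow> 'a word set monoid" where
  "pres_group X R =
     \<lparr>carrier = pres_class X R ` words_on X,
      mult = (\<lambda>A B. pres_class X R ((SOME u. u \<in> A) @ (SOME v. v \<in> B))),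
      one = pres_class X R []\<rparr>"

definition dehn_presentation :: "'a set \<Rightarrow> 'a word set \<Rightarrow> bool" where
  "dehn_presentation X R \<longleftrightarrow>
     (\<forall>w \<in> words_on X. w \<noteq> [] \<and> cyc_reduced w \<and> pres_eq X R w [] \<longrightarrow>
        (\<exists>v r. r \<in> symm_closure R \<and> (\<exists>p q. w = p @ v @ q) \<and> (\<exists>p q. r = p @ v @ q)
               \<and> length r < 2 * length v))"

datatype gen = Ga | Gb | Gc | Gd | Gr | Gs | Gt | Gu | Gv

abbreviation P :: "gen \<Rightarrow> gen letter" where "P x \<equiv> (x, True)"
abbreviation N :: "gen \<Rightarrow> gen letter" where "N x \<equiv> (x, False)"

text \<open>Standard presentation of the fundamental group of the closed orientable surface of genus 2.\<close>
definition X0 :: "gen set" where "X0 = {Ga, Gb, Gc, Gd}"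
definition R0 :: "gen word set" where
  "R0 = {[P Ga, P Gb, N Ga, N Gb, P Gc, P Gd, N Gc, N Gd]}"

definition X1 :: "gen set" where "X1 = {Ga, Gb, Gc, Gd, Gr, Gs}"
definition R1 :: "gen word set" where
  "R1 = {[P Ga, P Gb, N Ga, P Gr], [N Gr, N Gb, P Gc, P Gs], [N Gs, P Gd, N Gc, N Gd]}"

definition X2 :: "gen set" where "X2 = {Ga, Gb, Gc, Gd, Gr, Gs, Gt, Gu, Gv}"
definition R2 :: "gen word set" where
  "R2 = {[P Ga, P Gb, P Gr], [N Gr, N Ga, P Gs], [N Gs, N Gb, P Gt],
         [N Gt, P Gc, P Gu], [N Gu, P Gd, P Gv], [N Gv, N Gc, N Gd]}"

end

theory Submission
  imports Defs
begin

(* Both presentations arise from the one-relator presentation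
   <a, b, c, d | a b a^-1 b^-1 c d c^-1 d^-1> of the genus-two surface group by cutting its relator
   into short pieces joined by new generators; eliminating these generators again is a Tietze
   transformation, which gives the isomorphisms. Distinct cyclic conjugates never share their first two letters, so every
   piece is a single letter and C(4), C(3) follow from the relator lengths 4 and 3. T(q) fails
   exactly when cancelling pairs form a closed walk of length h with 3 <= h < q, and there is none.
   Finally, each presentation has a nonempty cyclically reduced word that is trivial (certified by
   inserting relators into its image in the one-relator presentation) but shares no subword of
   length 3, resp. 2, with a relator, whereas more than half of a relator has at least that length. *)

lemma linv_linv [simp]: "linv (linv l) = l"
  by (simp add: linv_def)

lemma fst_linv [simp]: "fst (linv l) = fst l"
  by (simp add: linv_def)

lemma winv_Nil [simp]: "winv [] = []"
  by (simp add: winv_def)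

lemma winv_Cons [simp]: "winv (l # w) = winv w @ [linv l]"
  by (simp add: winv_def)

lemma winv_append [simp]: "winv (u @ v) = winv v @ winv u"
  by (simp add: winv_def)

lemma winv_winv [simp]: "winv (winv w) = w"
  by (induct w) auto

lemma words_on_Nil [simp]: "[] \<in> words_on X"
  by (simp add: words_on_def)

lemma words_on_Cons [simp]: "l # w \<in> words_on X \<longleftrightarrow> fst l \<in> X \<and> w \<in> words_on X"
  by (auto simp: words_on_def)

lemma words_on_append [simp]: "u @ v \<in> words_on X \<longleftrightarrow> u \<in> words_on X \<and> v \<in> words_on X"
  by (auto simp: words_on_def)

lemma words_on_winv [simp]: "winv w \<in> words_on X \<longleftrightarrow> w \<in> words_on X"
  by (induct w) auto

lemma words_on_rotate [simp]: "rotate k w \<in> words_on X \<longleftrightarrow> w \<in> words_on X"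
  by (simp add: words_on_def)

lemma words_on_take: "w \<in> words_on X \<Longrightarrow> take i w \<in> words_on X"
  by (auto simp: words_on_def dest: in_set_takeD)

lemma words_on_drop: "w \<in> words_on X \<Longrightarrow> drop i w \<in> words_on X"
  by (auto simp: words_on_def dest: in_set_dropD)

lemma words_on_mono: "X \<subseteq> Y \<Longrightarrow> w \<in> words_on X \<Longrightarrow> w \<in> words_on Y"
  by (auto simp: words_on_def)

lemma freely_reduced_Nil [simp]: "freely_reduced []"
  by (simp add: freely_reduced_def)

lemma freely_reduced_singleton [simp]: "freely_reduced [l]"
  by (simp add: freely_reduced_def)

lemma freely_reduced_Cons_Cons [simp]:
  "freely_reduced (l # m # w) \<longleftrightarrow> m \<noteq> linv l \<and> freely_reduced (m # w)"
  unfolding freely_reduced_def by (auto simp: nth_Cons split: nat.splits)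

section \<open>Equality in a presented group\<close>

lemma equivclp_map:
  assumes "\<And>u v. r u v \<Longrightarrow> equivclp s (f u) (f v)" and "equivclp r a b"
  shows "equivclp s (f a) (f b)"
  using assms(2)
proof (induct rule: equivclp_induct)
  case (step b c)
  from step.hyps(2) have "equivclp s (f b) (f c)"
    by (auto intro: assms(1) equivclp_sym[OF assms(1)])
  with step.hyps(3) show ?case
    by (rule equivclp_trans)
qed simp

lemma pres_eq_refl [simp]: "pres_eq X R w w"
  by (simp add: pres_eq_def)

lemma pres_eq_sym [sym]: "pres_eq X R u v \<Longrightarrow> pres_eq X R v u"
  by (simp add: pres_eq_def equivclp_sym)

lemma pres_eq_trans [trans]: "pres_eq X R u v \<Longrightarrow> pres_eq X R v w \<Longrightarrow> pres_eq X R u w"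
  unfolding pres_eq_def by (rule equivclp_trans)

lemma pres_step_append_context:
  "pres_step X R u v \<Longrightarrow> pres_step X R (x @ u @ y) (x @ v @ y)"
  unfolding pres_step_def by (elim disjE exE conjE) (metis append.assoc)+

lemma pres_eq_append_context:
  "pres_eq X R u v \<Longrightarrow> pres_eq X R (x @ u @ y) (x @ v @ y)"
  unfolding pres_eq_def
  by (rule equivclp_map[where f = "\<lambda>w. x @ w @ y"]) (auto intro: pres_step_append_context)

lemma pres_eq_append:
  assumes "pres_eq X R u u'" and "pres_eq X R v v'"
  shows "pres_eq X R (u @ v) (u' @ v')"
proof -
  have "pres_eq X R (u @ v) (u' @ v)"
    using pres_eq_append_context[OF assms(1), of "[]" v] by simp
  also have "pres_eq X R \<dots> (u' @ v')"
    using pres_eq_append_context[OF assms(2), of u' "[]"] by simp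
  finally show ?thesis .
qed

lemma pres_eq_cancel: "fst l \<in> X \<Longrightarrow> pres_eq X R (p @ [l, linv l] @ q) (p @ q)"
  unfolding pres_eq_def pres_step_def by (rule converse_r_into_equivclp) blast

lemma pres_eq_relator: "r \<in> R \<Longrightarrow> pres_eq X R (p @ r @ q) (p @ q)"
  unfolding pres_eq_def pres_step_def by (rule converse_r_into_equivclp) blast

lemma pres_eq_Nil_if_relator: "r \<in> R \<Longrightarrow> pres_eq X R r []"
  using pres_eq_relator[of r R X "[]" "[]"] by simp

lemma pres_eq_append_winv: "w \<in> words_on X \<Longrightarrow> pres_eq X R (w @ winv w) []"
proof (induct w)
  case (Cons l w)
  then have "pres_eq X R ([l] @ (w @ winv w) @ [linv l]) ([l] @ [] @ [linv l])"
    by (intro pres_eq_append_context) simp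
  also have "pres_eq X R \<dots> []"
    using Cons.prems pres_eq_cancel[of l X R "[]" "[]"] by simp
  finally show ?case by simp
qed simp

lemma pres_eq_winv_append: "w \<in> words_on X \<Longrightarrow> pres_eq X R (winv w @ w) []"
  using pres_eq_append_winv[of "winv w" X R] by simp

lemma pres_eq_winv_right:
  assumes "pres_eq X R (u @ v) []" and "u \<in> words_on X"
  shows "pres_eq X R v (winv u)"
proof -
  have "pres_eq X R v ((winv u @ u) @ v)"
    using pres_eq_append[OF pres_eq_winv_append[OF assms(2)] pres_eq_refl, of R v]
    by (simp add: pres_eq_sym)
  also have "pres_eq X R \<dots> (winv u @ [] @ [])"
    using pres_eq_append_context[OF assms(1), where x = "winv u" and y = "[]"] by simp
  finally show ?thesis by simp
qed

lemma pres_eq_winv_if_relator: "u @ v \<in> R \<Longrightarrow> u \<in> words_on X \<Longrightarrow> pres_eq X R v (winv u)"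
  by (rule pres_eq_winv_right[OF pres_eq_Nil_if_relator])

lemma pres_eq_Nil_rotate:
  assumes "pres_eq X R (u @ v) []" and "u \<in> words_on X"
  shows "pres_eq X R (v @ u) []"
proof -
  have "pres_eq X R (v @ u) (winv u @ u)"
    using pres_eq_append[OF pres_eq_winv_right[OF assms] pres_eq_refl] .
  also have "pres_eq X R \<dots> []"
    using pres_eq_winv_append[OF assms(2)] .
  finally show ?thesis .
qed

lemma pres_eq_winv:
  assumes "pres_eq X R u v" and "u \<in> words_on X" and "v \<in> words_on X"
  shows "pres_eq X R (winv u) (winv v)"
proof -
  have "pres_eq X R (winv u) (winv u @ v @ winv v)"
    using pres_eq_append_context[OF pres_eq_append_winv[OF assms(3)],
        where x = "winv u" and y = "[]"]
    by (simp add: pres_eq_sym)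
  also have "pres_eq X R \<dots> ((winv u @ u) @ winv v)"
    using pres_eq_append_context[OF pres_eq_sym[OF assms(1)], where x = "winv u" and y = "winv v"]
    by simp
  also have "pres_eq X R \<dots> ([] @ winv v)"
    using pres_eq_append[OF pres_eq_winv_append[OF assms(2)] pres_eq_refl] .
  finally show ?thesis by simp
qed

lemma symm_closure_words_on:
  "R \<subseteq> words_on X \<Longrightarrow> \<rho> \<in> symm_closure R \<Longrightarrow> \<rho> \<in> words_on X"
  by (auto simp: symm_closure_def)

lemma pres_eq_Nil_if_symm_closure:
  assumes "R \<subseteq> words_on X" and "\<rho> \<in> symm_closure R"
  shows "pres_eq X R \<rho> []"
proof -
  obtain k r where \<rho>: "\<rho> = rotate k r" and r: "r \<in> R \<union> winv ` R"
    using assms(2) by (auto simp: symm_closure_def)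
  have "r \<in> words_on X"
    using r assms(1) by auto
  have "pres_eq X R r []"
  proof (cases "r \<in> R")
    case False
    then obtain r0 where "r0 \<in> R" and "r = winv r0"
      using r by auto
    then show ?thesis
      using pres_eq_winv[OF pres_eq_Nil_if_relator, of r0 R X] assms(1) by auto
  qed (rule pres_eq_Nil_if_relator)
  define m where "m = k mod length r"
  have "pres_eq X R (take m r @ drop m r) []"
    using \<open>pres_eq X R r []\<close> by simp
  then have "pres_eq X R (drop m r @ take m r) []"
    using \<open>r \<in> words_on X\<close> by (rule pres_eq_Nil_rotate[OF _ words_on_take])
  then show ?thesis
    unfolding \<rho> m_def by (simp add: rotate_drop_take)
qed

fun free_reduce_aux :: "'a word \<Rightarrow> 'a word \<Rightarrow> 'a word" where
  "free_reduce_aux acc [] = rev acc"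
| "free_reduce_aux [] (m # w) = free_reduce_aux [m] w"
| "free_reduce_aux (l # acc) (m # w) =
     (if m = linv l then free_reduce_aux acc w else free_reduce_aux (m # l # acc) w)"

definition free_reduce :: "'a word \<Rightarrow> 'a word" where
  "free_reduce w = free_reduce_aux [] w"

lemma pres_eq_free_reduce_aux:
  "rev acc @ w \<in> words_on X \<Longrightarrow> pres_eq X R (rev acc @ w) (free_reduce_aux acc w)"
proof (induct acc w rule: free_reduce_aux.induct)
  case (3 l acc m w)
  show ?case
  proof (cases "m = linv l")
    case True
    have "pres_eq X R (rev acc @ [l, linv l] @ w) (rev acc @ w)"
      using "3.prems" by (intro pres_eq_cancel) simp
    also have "pres_eq X R \<dots> (free_reduce_aux acc w)"
      using 3 True by simp
    finally show ?thesis
      using True by simp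
  qed (use 3 in simp)
qed simp_all

lemma pres_eq_free_reduce: "w \<in> words_on X \<Longrightarrow> pres_eq X R w (free_reduce w)"
  using pres_eq_free_reduce_aux[of "[]" w X R] by (simp add: free_reduce_def)

lemma set_free_reduce_aux: "set (free_reduce_aux acc w) \<subseteq> set acc \<union> set w"
  by (induct acc w rule: free_reduce_aux.induct) auto

lemma free_reduce_words_on: "w \<in> words_on X \<Longrightarrow> free_reduce w \<in> words_on X"
  using set_free_reduce_aux[of "[]" w] by (auto simp: free_reduce_def words_on_def)

lemma pres_eq_Nil_if_free_reduce:
  assumes "w \<in> words_on X" and "free_reduce w = [] \<or> free_reduce w \<in> R"
  shows "pres_eq X R w []"
proof -
  have "pres_eq X R w (free_reduce w)"
    using assms(1) by (rule pres_eq_free_reduce)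
  also have "pres_eq X R \<dots> []"
    using assms(2) pres_eq_Nil_if_relator by auto
  finally show ?thesis .
qed

section \<open>Substitutions and Tietze transformations\<close>

definition subst_letter :: "('a \<Rightarrow> 'a word) \<Rightarrow> 'a letter \<Rightarrow> 'a word" where
  "subst_letter \<phi> l = (if snd l then \<phi> (fst l) else winv (\<phi> (fst l)))"

definition subst :: "('a \<Rightarrow> 'a word) \<Rightarrow> 'a word \<Rightarrow> 'a word" where
  "subst \<phi> w = concat (map (subst_letter \<phi>) w)"

lemma subst_Nil [simp]: "subst \<phi> [] = []"
  by (simp add: subst_def)

lemma subst_Cons [simp]: "subst \<phi> (l # w) = subst_letter \<phi> l @ subst \<phi> w"
  by (simp add: subst_def)

lemma subst_append [simp]: "subst \<phi> (u @ v) = subst \<phi> u @ subst \<phi> v"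
  by (simp add: subst_def)

lemma subst_letter_linv [simp]: "subst_letter \<phi> (linv l) = winv (subst_letter \<phi> l)"
  by (simp add: subst_letter_def linv_def)

lemma subst_letters [simp]: "subst (\<lambda>x. [(x, True)]) w = w"
  by (induct w) (auto simp: subst_letter_def linv_def)

lemma subst_words_on:
  "(\<And>x. x \<in> X \<Longrightarrow> \<phi> x \<in> words_on Y) \<Longrightarrow> w \<in> words_on X \<Longrightarrow> subst \<phi> w \<in> words_on Y"
  by (induct w) (auto simp: subst_letter_def)

definition pres_hom :: "'a set \<Rightarrow> 'a word set \<Rightarrow> 'a set \<Rightarrow> 'a word set \<Rightarrow> ('a \<Rightarrow> 'a word) \<Rightarrow> bool"
  where "pres_hom X R Y S \<phi> \<longleftrightarrow>
    (\<forall>x\<in>X. \<phi> x \<in> words_on Y) \<and> (\<forall>r\<in>R. pres_eq Y S (subst \<phi> r) [])"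

lemma pres_step_subst:
  assumes "pres_hom X R Y S \<phi>" and "pres_step X R u v"
  shows "pres_eq Y S (subst \<phi> u) (subst \<phi> v)"
  using assms(2) unfolding pres_step_def
proof (elim disjE exE conjE)
  fix p q l
  assume "fst l \<in> X" and "u = p @ q" and "v = p @ [l, linv l] @ q"
  moreover have "subst_letter \<phi> l \<in> words_on Y"
    using assms(1) \<open>fst l \<in> X\<close> by (simp add: pres_hom_def subst_letter_def)
  ultimately show ?thesis
    using pres_eq_append_context[OF pres_eq_append_winv, of "subst_letter \<phi> l" Y S "subst \<phi> p"
        "subst \<phi> q"]
    by (simp add: pres_eq_sym)
next
  fix p q r
  assume "r \<in> R" and "u = p @ q" and "v = p @ r @ q"
  then show ?thesis
    using assms(1) pres_eq_append_context[of Y S "subst \<phi> r" "[]" "subst \<phi> p" "subst \<phi> q"]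
    by (simp add: pres_hom_def pres_eq_sym)
qed

lemma pres_eq_subst:
  assumes "pres_hom X R Y S \<phi>" and "pres_eq X R u v"
  shows "pres_eq Y S (subst \<phi> u) (subst \<phi> v)"
  using equivclp_map[where f = "subst \<phi>", OF _ assms(2)[unfolded pres_eq_def]]
    pres_step_subst[OF assms(1)]
  by (simp add: pres_eq_def)

lemma pres_class_eq_iff: "pres_class X R u = pres_class X R v \<longleftrightarrow> pres_eq X R u v"
  unfolding pres_class_def using pres_eq_trans pres_eq_sym pres_eq_refl by blast

lemma pres_eq_some_pres_class: "pres_eq X R u (SOME u'. u' \<in> pres_class X R u)"
  using someI[of "\<lambda>u'. u' \<in> pres_class X R u" u] by (simp add: pres_class_def)

lemma carrier_pres_group: "carrier (pres_group X R) = pres_class X R ` words_on X"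
  by (simp add: pres_group_def)

lemma mult_pres_group:
  "pres_class X R u \<otimes>\<^bsub>pres_group X R\<^esub> pres_class X R v = pres_class X R (u @ v)"
  unfolding pres_group_def
  by (simp add: pres_class_eq_iff) (metis pres_eq_append pres_eq_some_pres_class pres_eq_sym)

locale tietze_elimination =
  fixes X :: "'a set" and R :: "'a word set" and Y :: "'a set" and S :: "'a word set"
    and \<phi> :: "'a \<Rightarrow> 'a word"
  assumes relators_words_on: "R \<subseteq> words_on X"
    and kept_subset: "Y \<subseteq> X"
    and hom: "pres_hom X R Y S \<phi>"
    and kept_fixed: "\<And>y. y \<in> Y \<Longrightarrow> \<phi> y = [(y, True)]"
    and eliminates: "\<And>x. x \<in> X \<Longrightarrow> pres_eq X R (\<phi> x) [(x, True)]"
    and relators_image: "S \<subseteq> subst \<phi> ` R"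
begin

lemma image_words_on: "x \<in> X \<Longrightarrow> \<phi> x \<in> words_on X"
  using hom kept_subset words_on_mono unfolding pres_hom_def by blast

lemma pres_eq_subst_self: "w \<in> words_on X \<Longrightarrow> pres_eq X R (subst \<phi> w) w"
proof (induct w)
  case (Cons l w)
  obtain x b where l: "l = (x, b)"
    by (cases l)
  have "pres_eq X R (subst_letter \<phi> l) [l]"
  proof (cases b)
    case False
    then show ?thesis
      using pres_eq_winv[OF eliminates image_words_on] Cons.prems l
      by (simp add: subst_letter_def linv_def)
  qed (use Cons.prems l eliminates in \<open>simp add: subst_letter_def\<close>)
  then show ?case
    using Cons pres_eq_append[of X R "subst_letter \<phi> l" "[l]"] by simp
qed simp

lemma pres_eq_Nil_if_target_relator: "s \<in> S \<Longrightarrow> pres_eq X R s []"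
  using relators_image relators_words_on pres_eq_subst_self pres_eq_Nil_if_relator pres_eq_trans
  by blast

lemma pres_eq_if_pres_eq_target: "pres_eq Y S u v \<Longrightarrow> pres_eq X R u v"
  using pres_eq_subst[of Y S X R "\<lambda>x. [(x, True)]"] kept_subset pres_eq_Nil_if_target_relator
  by (auto simp: pres_hom_def)

lemma pres_eq_subst_iff:
  assumes "u \<in> words_on X" and "v \<in> words_on X"
  shows "pres_eq Y S (subst \<phi> u) (subst \<phi> v) \<longleftrightarrow> pres_eq X R u v"
proof
  assume "pres_eq Y S (subst \<phi> u) (subst \<phi> v)"
  then have "pres_eq X R (subst \<phi> u) (subst \<phi> v)"
    by (rule pres_eq_if_pres_eq_target)
  then show "pres_eq X R u v"
    using pres_eq_subst_self assms pres_eq_trans pres_eq_sym by meson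
qed (rule pres_eq_subst[OF hom])

lemma subst_kept: "w \<in> words_on Y \<Longrightarrow> subst \<phi> w = w"
  by (induct w) (auto simp: kept_fixed subst_letter_def linv_def)

theorem pres_group_iso: "pres_group X R \<cong> pres_group Y S"
proof -
  define h where "h A = pres_class Y S (subst \<phi> (SOME u. u \<in> A))" for A
  have h_class: "h (pres_class X R w) = pres_class Y S (subst \<phi> w)" for w
    unfolding h_def pres_class_eq_iff
    using pres_eq_subst[OF hom pres_eq_some_pres_class] by (rule pres_eq_sym)
  have "h \<in> hom (pres_group X R) (pres_group Y S)"
    using subst_words_on[of X \<phi> Y] hom
    by (auto simp: hom_def carrier_pres_group h_class mult_pres_group pres_hom_def)
  moreover have "inj_on h (carrier (pres_group X R))"
    by (auto simp: inj_on_def carrier_pres_group h_class pres_class_eq_iff pres_eq_subst_iff)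
  moreover have "h ` carrier (pres_group X R) = carrier (pres_group Y S)"
  proof -
    have "h (pres_class X R w) = pres_class Y S w" if "w \<in> words_on Y" for w
      using that by (simp add: h_class subst_kept)
    then show ?thesis
      using subst_words_on[of X \<phi> Y] hom words_on_mono[OF kept_subset]
      by (auto simp: carrier_pres_group h_class pres_hom_def image_iff) metis
  qed
  ultimately show ?thesis
    unfolding is_iso_def iso_def bij_betw_def by blast
qed

end

section \<open>Finite certificates\<close>

definition symm_closure_list :: "'a word list \<Rightarrow> 'a word list" where
  "symm_closure_list rs =
     concat (map (\<lambda>r. map (\<lambda>k. rotate k r) [0..<length r]) (rs @ map winv rs))"

lemma range_rotate:
  assumes "r \<noteq> []"
  shows "range (\<lambda>k. rotate k r) = (\<lambda>k. rotate k r) ` {0..<length r}"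
proof (intro equalityI subsetI)
  fix w assume "w \<in> range (\<lambda>k. rotate k r)"
  then obtain k where "w = rotate (k mod length r) r"
    using rotate_conv_mod by blast
  moreover have "k mod length r \<in> {0..<length r}"
    using assms by simp
  ultimately show "w \<in> (\<lambda>k. rotate k r) ` {0..<length r}"
    by blast
qed auto

lemma symm_closure_eq_set_list:
  assumes "[] \<notin> set rs"
  shows "symm_closure (set rs) = set (symm_closure_list rs)"
proof -
  have "symm_closure (set rs) = (\<Union>r \<in> set (rs @ map winv rs). range (\<lambda>k. rotate k r))"
    unfolding symm_closure_def by auto
  also have "\<dots> = (\<Union>r \<in> set (rs @ map winv rs). (\<lambda>k. rotate k r) ` {0..<length r})"
    using assms by (intro SUP_cong refl range_rotate) (auto simp: winv_def)
  also have "\<dots> = set (symm_closure_list rs)"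
    by (simp add: symm_closure_list_def)
  finally show ?thesis .
qed

lemma C_cond_if_distinct_prefixes:
  assumes prefixes: "\<forall>r1\<in>symm_closure R. \<forall>r2\<in>symm_closure R. r1 \<noteq> r2 \<longrightarrow> take 2 r1 \<noteq> take 2 r2"
    and long: "\<forall>r\<in>symm_closure R. p \<le> length r"
  shows "C_cond p R"
  unfolding C_cond_def
proof (intro ballI allI impI)
  fix r ps
  assume "r \<in> symm_closure R" and ps: "concat ps = r \<and> (\<forall>q\<in>set ps. piece R q)"
  have "length q = 1" if q: "piece R q" for q
  proof -
    obtain r1 r2 u1 u2 where "r1 \<in> symm_closure R" "r2 \<in> symm_closure R" "r1 \<noteq> r2"
      and "r1 = q @ u1" "r2 = q @ u2" "q \<noteq> []"
      using q unfolding piece_def by blast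
    moreover from \<open>r1 = q @ u1\<close> \<open>r2 = q @ u2\<close> have "take 2 r1 = take 2 r2" if "2 \<le> length q"
      using that by simp
    ultimately have "\<not> 2 \<le> length q"
      using prefixes by blast
    moreover have "0 < length q"
      using \<open>q \<noteq> []\<close> by simp
    ultimately show ?thesis
      by linarith
  qed
  with ps have "\<forall>q\<in>set ps. length q = 1"
    by blast
  then have "length (concat ps) = length ps"
    by (induct ps) auto
  with ps long \<open>r \<in> symm_closure R\<close> show "p \<le> length ps"
    by auto
qed

definition cancelling_pair :: "'a word \<Rightarrow> 'a word \<Rightarrow> bool" where
  "cancelling_pair u v \<longleftrightarrow> last u = linv (hd v) \<and> v \<noteq> winv u"

fun cancelling_walk_ends :: "'a word list \<Rightarrow> nat \<Rightarrow> 'a word \<Rightarrow> 'a word list" where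
  "cancelling_walk_ends L 0 u = [u]"
| "cancelling_walk_ends L (Suc k) u =
     filter (\<lambda>v. \<exists>w\<in>set (cancelling_walk_ends L k u). cancelling_pair w v) L"

lemma T_cond_if_no_cancelling_cycles:
  assumes closure: "symm_closure R = set L"
    and no_cycles: "\<forall>u\<in>set L. \<forall>h\<in>set [3..<q]. u \<notin> set (cancelling_walk_ends L h u)"
  shows "T_cond q R"
  unfolding T_cond_def
proof (intro allI impI)
  fix h and rs :: "nat \<Rightarrow> 'a word"
  assume h: "3 \<le> h \<and> h < q"
    and rs: "(\<forall>i<h. rs i \<in> symm_closure R) \<and> (\<forall>i<h. rs (Suc i mod h) \<noteq> winv (rs i))"
  show "\<exists>i<h. last (rs i) \<noteq> linv (hd (rs (Suc i mod h)))"
  proof (rule ccontr)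
    assume "\<not> ?thesis"
    with rs have cancelling: "cancelling_pair (rs i) (rs (Suc i mod h))" if "i < h" for i
      using that unfolding cancelling_pair_def by auto
    have "rs (k mod h) \<in> set (cancelling_walk_ends L k (rs 0))" if "k \<le> h" for k
      using that
    proof (induct k)
      case (Suc k)
      then have "rs k \<in> set (cancelling_walk_ends L k (rs 0))"
        by simp
      moreover have "rs (Suc k mod h) \<in> set L"
        using rs closure h by simp
      ultimately show ?case
        using cancelling[of k] Suc.prems by auto
    qed simp
    from this[of h] have "rs 0 \<in> set (cancelling_walk_ends L h (rs 0))"
      by simp
    moreover have "rs 0 \<in> set L"
      using rs closure h by auto
    ultimately show False
      using no_cycles h by auto
  qed
qed

definition infixes :: "nat \<Rightarrow> 'a list \<Rightarrow> 'a list list" where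
  "infixes m w = map (\<lambda>i. take m (drop i w)) [0..<Suc (length w - m)]"

lemma take_in_infixes:
  assumes "w = p @ v @ q" and "m \<le> length v"
  shows "take m v \<in> set (infixes m w)"
proof -
  have "take m v = take m (drop (length p) w)"
    using assms by simp
  moreover have "length p < Suc (length w - m)"
    using assms by simp
  ultimately show ?thesis
    unfolding infixes_def set_map set_upt by (intro image_eqI[of _ _ "length p"]) auto
qed

lemma not_dehn_presentation_if_no_common_infix:
  assumes w: "w \<in> words_on X" "w \<noteq> []" "cyc_reduced w" "pres_eq X R w []"
    and long: "\<forall>r\<in>symm_closure R. 2 * m \<le> length r + 2"
    and disjoint: "\<forall>r\<in>symm_closure R. set (infixes m w) \<inter> set (infixes m r) = {}"
  shows "\<not> dehn_presentation X R"
proof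
  assume "dehn_presentation X R"
  with w obtain v r p q p' q' where
    "r \<in> symm_closure R" "w = p @ v @ q" "r = p' @ v @ q'" "length r < 2 * length v"
    unfolding dehn_presentation_def by blast
  moreover from this long have "m \<le> length v"
    by fastforce
  ultimately show False
    using disjoint take_in_infixes by blast
qed

fun trivial_by_insertions :: "'a word list \<Rightarrow> 'a word \<Rightarrow> (nat \<times> 'a word) list \<Rightarrow> bool" where
  "trivial_by_insertions L w [] \<longleftrightarrow> free_reduce w = []"
| "trivial_by_insertions L w ((i, r) # cs) \<longleftrightarrow> r \<in> set L \<and>
     trivial_by_insertions L (take i (free_reduce w) @ r @ drop i (free_reduce w)) cs"

lemma pres_eq_Nil_if_trivial_by_insertions:
  assumes closure: "symm_closure R = set L" and "R \<subseteq> words_on X"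
  shows "w \<in> words_on X \<Longrightarrow> trivial_by_insertions L w cs \<Longrightarrow> pres_eq X R w []"
proof (induct cs arbitrary: w)
  case Nil
  then show ?case
    using pres_eq_free_reduce[of w X R] by simp
next
  case (Cons c cs)
  obtain i r where c: "c = (i, r)"
    by (cases c)
  let ?u = "free_reduce w"
  have r: "r \<in> symm_closure R"
    using Cons.prems c closure by simp
  have "pres_eq X R w (take i ?u @ drop i ?u)"
    using pres_eq_free_reduce[OF Cons.prems(1)] by simp
  also have "pres_eq X R \<dots> (take i ?u @ r @ drop i ?u)"
    using pres_eq_append_context[OF pres_eq_Nil_if_symm_closure[OF assms(2) r],
        where x = "take i ?u" and y = "drop i ?u"]
    by (simp add: pres_eq_sym)
  also have "pres_eq X R \<dots> []"
  proof (rule Cons.hyps)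
    have "?u \<in> words_on X"
      using Cons.prems(1) by (rule free_reduce_words_on)
    then show "take i ?u @ r @ drop i ?u \<in> words_on X"
      using symm_closure_words_on[OF assms(2) r] by (simp add: words_on_take words_on_drop)
  qed (use Cons.prems c in simp)
  finally show ?case .
qed

section \<open>The two presentations of the genus-two surface group\<close>

definition R0_list :: "gen word list" where
  "R0_list = [[P Ga, P Gb, N Ga, N Gb, P Gc, P Gd, N Gc, N Gd]]"

definition R1_list :: "gen word list" where
  "R1_list = [[P Ga, P Gb, N Ga, P Gr], [N Gr, N Gb, P Gc, P Gs], [N Gs, P Gd, N Gc, N Gd]]"

definition R2_list :: "gen word list" where
  "R2_list = [[P Ga, P Gb, P Gr], [N Gr, N Ga, P Gs], [N Gs, N Gb, P Gt],
              [N Gt, P Gc, P Gu], [N Gu, P Gd, P Gv], [N Gv, N Gc, N Gd]]"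

lemma symm_closure_R0: "symm_closure R0 = set (symm_closure_list R0_list)"
  using symm_closure_eq_set_list[of R0_list] by (simp add: R0_def R0_list_def)

lemma symm_closure_R1: "symm_closure R1 = set (symm_closure_list R1_list)"
  using symm_closure_eq_set_list[of R1_list] by (simp add: R1_def R1_list_def)

lemma symm_closure_R2: "symm_closure R2 = set (symm_closure_list R2_list)"
  using symm_closure_eq_set_list[of R2_list] by (simp add: R2_def R2_list_def)

lemma C_cond_4_R1: "C_cond 4 R1"
  by (rule C_cond_if_distinct_prefixes; unfold symm_closure_R1; code_simp)

lemma C_cond_3_R2: "C_cond 3 R2"
  by (rule C_cond_if_distinct_prefixes; unfold symm_closure_R2; code_simp)

lemma T_cond_5_R1: "T_cond 5 R1"
  by (rule T_cond_if_no_cancelling_cycles[OF symm_closure_R1]) code_simp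

lemma T_cond_7_R2: "T_cond 7 R2"
  by (rule T_cond_if_no_cancelling_cycles[OF symm_closure_R2]) code_simp

definition elim_P1 :: "gen \<Rightarrow> gen word" where
  "elim_P1 x = (case x of Gr \<Rightarrow> [P Ga, N Gb, N Ga] | Gs \<Rightarrow> [P Gd, N Gc, N Gd] | _ \<Rightarrow> [P x])"

definition elim_P2 :: "gen \<Rightarrow> gen word" where
  "elim_P2 x = (case x of
       Gr \<Rightarrow> [N Gb, N Ga]
     | Gs \<Rightarrow> [P Ga, N Gb, N Ga]
     | Gt \<Rightarrow> [P Gb, P Ga, N Gb, N Ga]
     | Gu \<Rightarrow> [N Gc, P Gb, P Ga, N Gb, N Ga]
     | Gv \<Rightarrow> [N Gc, N Gd]
     | _ \<Rightarrow> [P x])"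

lemma tietze_P1: "tietze_elimination X1 R1 X0 R0 elim_P1"
proof
  show "R1 \<subseteq> words_on X1" and "X0 \<subseteq> X1"
    by (simp_all add: R1_def X1_def X0_def)
  show "pres_hom X1 R1 X0 R0 elim_P1"
    unfolding pres_hom_def
  proof (intro conjI ballI)
    show "elim_P1 x \<in> words_on X0" if "x \<in> X1" for x
      using that by (auto simp: X1_def X0_def elim_P1_def)
    show "pres_eq X0 R0 (subst elim_P1 r) []" if "r \<in> R1" for r
      using that
      by (intro pres_eq_Nil_if_free_reduce)
        (auto simp: R1_def R0_def X0_def elim_P1_def subst_letter_def linv_def free_reduce_def)
  qed
  show "elim_P1 y = [(y, True)]" if "y \<in> X0" for y
    using that by (auto simp: X0_def elim_P1_def)
  show "pres_eq X1 R1 (elim_P1 x) [(x, True)]" if "x \<in> X1" for x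
  proof -
    have "pres_eq X1 R1 [P Gr] [P Ga, N Gb, N Ga]"
      using pres_eq_winv_if_relator[of "[P Ga, P Gb, N Ga]" "[P Gr]" R1 X1]
      by (simp add: R1_def X1_def linv_def)
    moreover have "pres_eq X1 R1 [P Gd, N Gc, N Gd] [P Gs]"
      using pres_eq_winv_if_relator[of "[N Gs]" "[P Gd, N Gc, N Gd]" R1 X1]
      by (simp add: R1_def X1_def linv_def)
    ultimately show ?thesis
      using that by (auto simp: X1_def elim_P1_def pres_eq_sym)
  qed
  show "R0 \<subseteq> subst elim_P1 ` R1"
    by (simp add: R0_def R1_def elim_P1_def subst_letter_def linv_def)
qed

lemma tietze_P2: "tietze_elimination X2 R2 X0 R0 elim_P2"
proof
  show "R2 \<subseteq> words_on X2" and "X0 \<subseteq> X2"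
    by (simp_all add: R2_def X2_def X0_def)
  show "pres_hom X2 R2 X0 R0 elim_P2"
    unfolding pres_hom_def
  proof (intro conjI ballI)
    show "elim_P2 x \<in> words_on X0" if "x \<in> X2" for x
      using that by (auto simp: X2_def X0_def elim_P2_def)
    show "pres_eq X0 R0 (subst elim_P2 r) []" if "r \<in> R2" for r
      using that
      by (intro pres_eq_Nil_if_free_reduce)
        (auto simp: R2_def R0_def X0_def elim_P2_def subst_letter_def linv_def free_reduce_def)
  qed
  show "elim_P2 y = [(y, True)]" if "y \<in> X0" for y
    using that by (auto simp: X0_def elim_P2_def)
  show "pres_eq X2 R2 (elim_P2 x) [(x, True)]" if "x \<in> X2" for x
  proof -
    have r: "pres_eq X2 R2 [P Gr] [N Gb, N Ga]"
      using pres_eq_winv_if_relator[of "[P Ga, P Gb]" "[P Gr]" R2 X2]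
      by (simp add: R2_def X2_def linv_def)
    have "pres_eq X2 R2 [P Gs] ([P Ga] @ [P Gr])"
      using pres_eq_winv_if_relator[of "[N Gr, N Ga]" "[P Gs]" R2 X2]
      by (simp add: R2_def X2_def linv_def)
    also have "pres_eq X2 R2 \<dots> ([P Ga] @ [N Gb, N Ga])"
      using pres_eq_refl r by (rule pres_eq_append)
    finally have s: "pres_eq X2 R2 [P Gs] [P Ga, N Gb, N Ga]"
      by simp
    have "pres_eq X2 R2 [P Gt] ([P Gb] @ [P Gs])"
      using pres_eq_winv_if_relator[of "[N Gs, N Gb]" "[P Gt]" R2 X2]
      by (simp add: R2_def X2_def linv_def)
    also have "pres_eq X2 R2 \<dots> ([P Gb] @ [P Ga, N Gb, N Ga])"
      using pres_eq_refl s by (rule pres_eq_append)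
    finally have t: "pres_eq X2 R2 [P Gt] [P Gb, P Ga, N Gb, N Ga]"
      by simp
    have "pres_eq X2 R2 [P Gu] ([N Gc] @ [P Gt])"
      using pres_eq_winv_if_relator[of "[N Gt, P Gc]" "[P Gu]" R2 X2]
      by (simp add: R2_def X2_def linv_def)
    also have "pres_eq X2 R2 \<dots> ([N Gc] @ [P Gb, P Ga, N Gb, N Ga])"
      using pres_eq_refl t by (rule pres_eq_append)
    finally have u: "pres_eq X2 R2 [P Gu] [N Gc, P Gb, P Ga, N Gb, N Ga]"
      by simp
    have v: "pres_eq X2 R2 [N Gc, N Gd] [P Gv]"
      using pres_eq_winv_if_relator[of "[N Gv]" "[N Gc, N Gd]" R2 X2]
      by (simp add: R2_def X2_def linv_def)
    show ?thesis
      using that r s t u v by (auto simp: X2_def elim_P2_def pres_eq_sym)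
  qed
  show "R0 \<subseteq> subst elim_P2 ` R2"
    by (simp add: R0_def R2_def elim_P2_def subst_letter_def linv_def)
qed

definition non_dehn_word_P1 :: "gen word" where
  "non_dehn_word_P1 = [P Gb, N Ga, N Gb, P Gc, P Gd, N Gc, N Gc, N Gd, N Gr, N Gb, N Gd, N Gs,
     N Gs, P Gd, P Gs, N Gr, N Ga, P Gr, P Gr, P Ga, P Gc, P Gs, P Ga, P Gb]"

definition non_dehn_word_P2 :: "gen word" where
  "non_dehn_word_P2 = [P Gb, N Ga, N Gb, P Gc, P Gd, N Gc, P Gv, N Gt, N Gd, N Gu, N Gv, P Gu,
     N Gs, P Gr, P Gs, P Ga, P Gt, N Gr]"

lemma non_dehn_word_P1_trivial: "pres_eq X1 R1 non_dehn_word_P1 []"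
proof -
  have w: "non_dehn_word_P1 \<in> words_on X1"
    by (simp add: non_dehn_word_P1_def X1_def)
  have "pres_eq X0 R0 (subst elim_P1 non_dehn_word_P1) []"
  proof (rule pres_eq_Nil_if_trivial_by_insertions[OF symm_closure_R0])
    show "R0 \<subseteq> words_on X0"
      by (simp add: R0_def X0_def)
    show "subst elim_P1 non_dehn_word_P1 \<in> words_on X0"
      by (simp add: non_dehn_word_P1_def X0_def elim_P1_def subst_letter_def)
    show "trivial_by_insertions (symm_closure_list R0_list) (subst elim_P1 non_dehn_word_P1)
      [(5, [N Gd, N Gc, P Gb, P Ga, N Gb, N Ga, P Gd, P Gc]),
       (6, [N Gb, N Ga, P Gd, P Gc, N Gd, N Gc, P Gb, P Ga]),
       (6, [N Ga, P Gd, P Gc, N Gd, N Gc, P Gb, P Ga, N Gb]),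
       (5, [P Gc, N Gd, N Gc, P Gb, P Ga, N Gb, N Ga, P Gd])]"
      unfolding non_dehn_word_P1_def by code_simp
  qed
  then show ?thesis
    using tietze_elimination.pres_eq_subst_iff[OF tietze_P1 w, of "[]"] by simp
qed

lemma non_dehn_word_P2_trivial: "pres_eq X2 R2 non_dehn_word_P2 []"
proof -
  have w: "non_dehn_word_P2 \<in> words_on X2"
    by (simp add: non_dehn_word_P2_def X2_def)
  have "pres_eq X0 R0 (subst elim_P2 non_dehn_word_P2) []"
  proof (rule pres_eq_Nil_if_trivial_by_insertions[OF symm_closure_R0])
    show "R0 \<subseteq> words_on X0"
      by (simp add: R0_def X0_def)
    show "subst elim_P2 non_dehn_word_P2 \<in> words_on X0"
      by (simp add: non_dehn_word_P2_def X0_def elim_P2_def subst_letter_def)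
    show "trivial_by_insertions (symm_closure_list R0_list) (subst elim_P2 non_dehn_word_P2)
      [(5, [N Gd, N Gc, P Gb, P Ga, N Gb, N Ga, P Gd, P Gc]),
       (6, [N Gb, N Ga, P Gd, P Gc, N Gd, N Gc, P Gb, P Ga]),
       (6, [P Ga, N Gb, N Ga, P Gd, P Gc, N Gd, N Gc, P Gb])]"
      unfolding non_dehn_word_P2_def by code_simp
  qed
  then show ?thesis
    using tietze_elimination.pres_eq_subst_iff[OF tietze_P2 w, of "[]"] by simp
qed

lemma not_dehn_presentation_P1: "\<not> dehn_presentation X1 R1"
proof (rule not_dehn_presentation_if_no_common_infix[where w = non_dehn_word_P1 and m = 3])
  show "non_dehn_word_P1 \<in> words_on X1" "non_dehn_word_P1 \<noteq> []" "cyc_reduced non_dehn_word_P1"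
    by (simp_all add: non_dehn_word_P1_def X1_def cyc_reduced_def linv_def)
  show "\<forall>r\<in>symm_closure R1. 2 * 3 \<le> length r + 2"
    and "\<forall>r\<in>symm_closure R1. set (infixes 3 non_dehn_word_P1) \<inter> set (infixes 3 r) = {}"
    unfolding symm_closure_R1 non_dehn_word_P1_def by code_simp+
qed (rule non_dehn_word_P1_trivial)

lemma not_dehn_presentation_P2: "\<not> dehn_presentation X2 R2"
proof (rule not_dehn_presentation_if_no_common_infix[where w = non_dehn_word_P2 and m = 2])
  show "non_dehn_word_P2 \<in> words_on X2" "non_dehn_word_P2 \<noteq> []" "cyc_reduced non_dehn_word_P2"
    by (simp_all add: non_dehn_word_P2_def X2_def cyc_reduced_def linv_def)
  show "\<forall>r\<in>symm_closure R2. 2 * 2 \<le> length r + 2"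
    and "\<forall>r\<in>symm_closure R2. set (infixes 2 non_dehn_word_P2) \<inter> set (infixes 2 r) = {}"
    unfolding symm_closure_R2 non_dehn_word_P2_def by code_simp+
qed (rule non_dehn_word_P2_trivial)

theorem mainTheorem7:
  shows "C_cond 4 R1 \<and> T_cond 5 R1 \<and> C_cond 3 R2 \<and> T_cond 7 R2
    \<and> pres_group X1 R1 \<cong> pres_group X0 R0 \<and> pres_group X2 R2 \<cong> pres_group X0 R0
    \<and> \<not> dehn_presentation X1 R1 \<and> \<not> dehn_presentation X2 R2"
  using C_cond_4_R1 T_cond_5_R1 C_cond_3_R2 T_cond_7_R2
    tietze_elimination.pres_group_iso[OF tietze_P1] tietze_elimination.pres_group_iso[OF tietze_P2]
    not_dehn_presentation_P1 not_dehn_presentation_P2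
  by blast

end
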